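(* Let $N\geq 1$ and let $a_1,\dots,a_N$ be real numbers with $1<a_1<a_2<\cdots<a_N$; set $a_0=1$ and $\mathbf{a}=(a_1,\dots,a_N)$. Let $\delta>0$. Then: (a) If $f:[0,\delta]\to\mathbb{R}$ is a solution of $f(x)+f(a_1x)+\cdots+f(a_Nx)=0$ on $[0,\delta]$ and $f\in C^{(m(\mathbf{a}))}[0,\delta]$, then $f\equiv 0$ on $[0,\delta]$. (b) If $f:[-\delta,0]\to\mathbb{R}$ is a solution of $f(x)+f(a_1x)+\cdots+f(a_Nx)=0$ on $[-\delta,0]$ and $f\in C^{(m(\mathbf{a}))}[-\delta,0]$, then $f\equiv 0$ on $[-\delta,0]$.
   Context: For an interval $I\subseteq\mathbb{R}$, a function $f:I\to\mathbb{R}$ is called a solution of $f(x)+f(a_1x)+\cdots+f(a_Nx)=0$ on $I$ if $f(x)+f(a_1x)+\cdots+f(a_Nx)=0$ holds for every $x$ such that $\{x,a_1x,\dots,a_Nx\}\subseteq I$. With $a_0=1$, define the natural number $m(\mathbf{a})=\min\{m\in\mathbb{N}: \sum_{k=0}^{N-1}(a_k/a_N)^m<1\}$ (well defined since $0<a_k/a_N<1$ for $0\le k\le N-1$). $C^{(m)}[\alpha,\beta]$ denotes the $m$ times continuously differentiable functions on $[\alpha,\beta]$ (one-sided derivatives at endpoints). *)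

theory Defs
  imports "HOL-Analysis.Analysis"
begin

text \<open>f is a solution of f(x) + f(a_1 x) + ... + f(a_N x) = 0 on the interval I
  (with a 0 = 1): the equation holds for every x with all a_k x in I.\<close>
definition is_solution_on :: "nat \<Rightarrow> (nat \<Rightarrow> real) \<Rightarrow> real set \<Rightarrow> (real \<Rightarrow> real) \<Rightarrow> bool" where
  "is_solution_on N a I f \<longleftrightarrow>
     (\<forall>x. (\<forall>k\<le>N. a k * x \<in> I) \<longrightarrow> (\<Sum>k\<le>N. f (a k * x)) = 0)"

definition m_of :: "nat \<Rightarrow> (nat \<Rightarrow> real) \<Rightarrow> nat" where
  "m_of N a = (LEAST m. (\<Sum>k<N. (a k / a N) ^ m) < 1)"

definition Cm_on :: "nat \<Rightarrow> real \<Rightarrow> real \<Rightarrow> (real \<Rightarrow> real) \<Rightarrow> bool" where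
  "Cm_on m \<alpha> \<beta> f \<longleftrightarrow>
     (\<exists>D :: nat \<Rightarrow> real \<Rightarrow> real.
        (\<forall>x\<in>{\<alpha>..\<beta>}. D 0 x = f x) \<and>
        (\<forall>k<m. \<forall>x\<in>{\<alpha>..\<beta>}. (D k has_real_derivative D (Suc k) x) (at x within {\<alpha>..\<beta>})) \<and>
        continuous_on {\<alpha>..\<beta>} (D m))"

end

theory Submission
  imports Defs
begin

(* Put c_k = a_k / a_N, so 0 < c_k <= 1, c_N = 1, and every dilation
   y |-> c_k y maps an interval [alpha,beta] with alpha <= 0 <= beta into itself.
   A solution f then satisfies the dilation identity  sum_{k<=N} f (c_k y) = 0  on
   [alpha,beta].  Differentiating it j times gives  sum_{k<=N} c_k^j f^(j)(c_k y) = 0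
   for j <= m.  For j = m the top derivative g = f^(m) is continuous, and at a point
   where |g| is maximal the identity yields |g|max <= (sum_{k<N} c_k^m) |g|max; since
   this factor is < 1 by the choice m = m(a), g vanishes.  Descending, f^(j) has zero
   derivative, hence is constant, and the identity at y = 0 forces that constant to be
   zero. *)

lemma strict_mono_upto:
  fixes a :: "nat \<Rightarrow> real"
  assumes step: "\<And>k. k < N \<Longrightarrow> a k < a (Suc k)"
  shows "i < j \<Longrightarrow> j \<le> N \<Longrightarrow> a i < a j"
proof (induction j)
  case 0
  then show ?case by simp
next
  case (Suc j)
  then show ?case
    using step[of j] by (cases "i = j") auto
qed

lemma scaled_mem_interval:
  fixes \<alpha> \<beta> c y :: real
  assumes "\<alpha> \<le> 0" "0 \<le> \<beta>" "0 \<le> c" "c \<le> 1" "y \<in> {\<alpha>..\<beta>}"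
  shows "c * y \<in> {\<alpha>..\<beta>}"
proof (cases "0 \<le> y")
  case True
  then have "0 \<le> c * y" "c * y \<le> y"
    using assms(3,4) by (auto simp: mult_left_le_one_le)
  then show ?thesis using assms(1,5) by auto
next
  case False
  then have "c * y \<le> 0" "y \<le> c * y"
    using assms(3,4) by (auto simp: mult_nonneg_nonpos mult_left_le_one_le)
  then show ?thesis using assms(2,5) by auto
qed

lemma real_derivative_unique_interval:
  fixes \<alpha> \<beta> :: real
  assumes "\<alpha> < \<beta>" "y \<in> {\<alpha>..\<beta>}"
    and "(F has_real_derivative X) (at y within {\<alpha>..\<beta>})"
    and "(F has_real_derivative Y) (at y within {\<alpha>..\<beta>})"
  shows "X = Y"
  using vector_derivative_unique_within_closed_interval[of \<alpha> \<beta> y F X Y] assms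
  by (simp add: has_real_derivative_iff_has_vector_derivative)

lemma has_real_derivative_dilation:
  fixes c y :: real and S :: "real set"
  assumes maps: "(\<lambda>y. c * y) ` S \<subseteq> S"
    and deriv: "(g has_real_derivative g') (at (c * y) within S)"
  shows "((\<lambda>y. g (c * y)) has_real_derivative g' * c) (at y within S)"
proof -
  have "(g has_real_derivative g') (at (c * y) within (\<lambda>y. c * y) ` S)"
    using deriv maps by (rule has_field_derivative_subset)
  moreover have "((\<lambda>y. c * y) has_real_derivative c) (at y within S)"
    by (auto intro!: derivative_eq_intros)
  ultimately have "(g \<circ> (\<lambda>y. c * y) has_real_derivative g' * c) (at y within S)"
    by (rule DERIV_image_chain)
  then show ?thesis by (simp add: o_def)
qed

lemma dilation_identity_derivative:
  fixes c w :: "nat \<Rightarrow> real" and \<alpha> \<beta> :: real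
  assumes "\<alpha> < \<beta>"
    and maps: "\<And>k y. k \<le> N \<Longrightarrow> y \<in> {\<alpha>..\<beta>} \<Longrightarrow> c k * y \<in> {\<alpha>..\<beta>}"
    and deriv: "\<And>y. y \<in> {\<alpha>..\<beta>} \<Longrightarrow> (g has_real_derivative g' y) (at y within {\<alpha>..\<beta>})"
    and zero: "\<And>y. y \<in> {\<alpha>..\<beta>} \<Longrightarrow> (\<Sum>k\<le>N. w k * g (c k * y)) = 0"
    and y: "y \<in> {\<alpha>..\<beta>}"
  shows "(\<Sum>k\<le>N. w k * c k * g' (c k * y)) = 0"
proof -
  have "((\<lambda>y. w k * g (c k * y)) has_real_derivative w k * (g' (c k * y) * c k))
          (at y within {\<alpha>..\<beta>})" if "k \<le> N" for k
  proof -
    have "(\<lambda>y. c k * y) ` {\<alpha>..\<beta>} \<subseteq> {\<alpha>..\<beta>}"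
      using maps[OF that] by auto
    from has_real_derivative_dilation[OF this deriv[OF maps[OF that y]]]
    show ?thesis by (rule DERIV_cmult)
  qed
  then have sum: "((\<lambda>y. \<Sum>k\<le>N. w k * g (c k * y)) has_real_derivative
                   (\<Sum>k\<le>N. w k * (g' (c k * y) * c k))) (at y within {\<alpha>..\<beta>})"
    by (intro DERIV_sum) auto
  have const: "((\<lambda>y. \<Sum>k\<le>N. w k * g (c k * y)) has_real_derivative 0) (at y within {\<alpha>..\<beta>})"
    by (rule has_field_derivative_transform_within[where f="\<lambda>_. 0" and d=1])
      (use y zero in auto)
  from real_derivative_unique_interval[OF \<open>\<alpha> < \<beta>\<close> y sum const]
  show ?thesis by (simp add: algebra_simps)
qed

lemma dilation_identity_contraction_zero:
  fixes c w :: "nat \<Rightarrow> real" and g :: "real \<Rightarrow> real" and S :: "real set"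
  assumes "compact S"
    and cont: "continuous_on S g"
    and maps: "\<And>k y. k < N \<Longrightarrow> y \<in> S \<Longrightarrow> c k * y \<in> S"
    and ident: "\<And>y. y \<in> S \<Longrightarrow> g y + (\<Sum>k<N. w k * g (c k * y)) = 0"
    and small: "(\<Sum>k<N. \<bar>w k\<bar>) < 1"
  shows "\<forall>y\<in>S. g y = 0"
proof (cases "S = {}")
  case False
  have "continuous_on S (\<lambda>y. \<bar>g y\<bar>)"
    using cont by (intro continuous_intros)
  then obtain y0 where y0: "y0 \<in> S" and max: "\<forall>y\<in>S. \<bar>g y\<bar> \<le> \<bar>g y0\<bar>"
    using continuous_attains_sup[OF \<open>compact S\<close> False] by blast
  have "\<bar>g y0\<bar> = \<bar>\<Sum>k<N. w k * g (c k * y0)\<bar>"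
    using ident[OF y0] by (simp add: eq_neg_iff_add_eq_0[symmetric])
  also have "\<dots> \<le> (\<Sum>k<N. \<bar>w k\<bar> * \<bar>g (c k * y0)\<bar>)"
    by (rule order_trans[OF sum_abs]) (simp add: abs_mult)
  also have "\<dots> \<le> (\<Sum>k<N. \<bar>w k\<bar> * \<bar>g y0\<bar>)"
    using max maps y0 by (intro sum_mono mult_left_mono) auto
  also have "\<dots> = (\<Sum>k<N. \<bar>w k\<bar>) * \<bar>g y0\<bar>"
    by (simp add: sum_distrib_right)
  finally have "\<bar>g y0\<bar> \<le> (\<Sum>k<N. \<bar>w k\<bar>) * \<bar>g y0\<bar>" .
  with small have "\<bar>g y0\<bar> = 0"
    by (smt (verit) mult_le_cancel_right1 abs_ge_zero)
  then show ?thesis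
    using max by fastforce
qed simp

lemma dilation_identity_constant_zero:
  fixes c w :: "nat \<Rightarrow> real" and \<alpha> \<beta> :: real
  assumes zero_in: "0 \<in> {\<alpha>..\<beta>}"
    and flat: "\<And>y. y \<in> {\<alpha>..\<beta>} \<Longrightarrow> (g has_real_derivative 0) (at y within {\<alpha>..\<beta>})"
    and ident: "(\<Sum>k\<le>N. w k * g (c k * 0)) = 0"
    and weights: "(\<Sum>k\<le>N. w k) \<noteq> 0"
  shows "\<forall>y\<in>{\<alpha>..\<beta>}. g y = 0"
proof -
  obtain C where C: "\<forall>y\<in>{\<alpha>..\<beta>}. g y = C"
    using has_field_derivative_zero_constant[of "{\<alpha>..\<beta>}" g] flat by auto
  have "(\<Sum>k\<le>N. w k) * C = 0"
    using ident C zero_in by (simp add: sum_distrib_right)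
  with weights C show ?thesis by simp
qed

lemma dilation_identity_forces_zero:
  fixes c :: "nat \<Rightarrow> real" and \<alpha> \<beta> :: real and m :: nat
  assumes "\<alpha> \<le> 0" "0 \<le> \<beta>" "\<alpha> < \<beta>"
    and c_pos: "\<And>k. k \<le> N \<Longrightarrow> 0 < c k"
    and c_le: "\<And>k. k \<le> N \<Longrightarrow> c k \<le> 1"
    and c_top: "c N = 1"
    and small: "(\<Sum>k<N. c k ^ m) < 1"
    and smooth: "Cm_on m \<alpha> \<beta> f"
    and ident: "\<And>y. y \<in> {\<alpha>..\<beta>} \<Longrightarrow> (\<Sum>k\<le>N. f (c k * y)) = 0"
  shows "\<forall>y\<in>{\<alpha>..\<beta>}. f y = 0"
proof -
  obtain D where D0: "\<forall>y\<in>{\<alpha>..\<beta>}. D 0 y = f y"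
    and D_deriv: "\<forall>j<m. \<forall>y\<in>{\<alpha>..\<beta>}. (D j has_real_derivative D (Suc j) y) (at y within {\<alpha>..\<beta>})"
    and D_cont: "continuous_on {\<alpha>..\<beta>} (D m)"
    using smooth unfolding Cm_on_def by blast
  have maps: "c k * y \<in> {\<alpha>..\<beta>}" if "k \<le> N" "y \<in> {\<alpha>..\<beta>}" for k y
    using scaled_mem_interval[OF \<open>\<alpha> \<le> 0\<close> \<open>0 \<le> \<beta>\<close> _ c_le] c_pos that
    by (simp add: less_imp_le)
  have zero_in: "0 \<in> {\<alpha>..\<beta>}"
    using \<open>\<alpha> \<le> 0\<close> \<open>0 \<le> \<beta>\<close> by simp
  have derived: "\<forall>y\<in>{\<alpha>..\<beta>}. (\<Sum>k\<le>N. c k ^ j * D j (c k * y)) = 0" if "j \<le> m" for j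
    using that
  proof (induction j)
    case 0
    then show ?case using ident D0 maps by simp
  next
    case (Suc j)
    then show ?case
      using dilation_identity_derivative[OF \<open>\<alpha> < \<beta>\<close> maps,
            where g="D j" and g'="D (Suc j)" and w="\<lambda>k. c k ^ j"]
        D_deriv by (simp add: mult.assoc mult.commute)
  qed
  have top: "\<forall>y\<in>{\<alpha>..\<beta>}. D m y = 0"
  proof (rule dilation_identity_contraction_zero[where c=c and w="\<lambda>k. c k ^ m"])
    show "y \<in> {\<alpha>..\<beta>} \<Longrightarrow> D m y + (\<Sum>k<N. c k ^ m * D m (c k * y)) = 0" for y
      using derived[of m] c_top by (simp add: lessThan_Suc_atMost[symmetric] add.commute)
    show "(\<Sum>k<N. \<bar>c k ^ m\<bar>) < 1"
      using small c_pos by (simp add: less_imp_le)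
  qed (use D_cont maps in auto)
  have "\<forall>y\<in>{\<alpha>..\<beta>}. D (m - i) y = 0" if "i \<le> m" for i
    using that
  proof (induction i)
    case 0
    then show ?case using top by simp
  next
    case (Suc i)
    define j where "j = m - Suc i"
    have j: "j < m" "Suc j = m - i"
      using Suc.prems by (auto simp: j_def)
    have "(\<Sum>k\<le>N. c k ^ j) \<ge> c N ^ j"
      by (rule member_le_sum) (use c_pos in \<open>auto intro: less_imp_le\<close>)
    then have "(\<Sum>k\<le>N. c k ^ j) \<noteq> 0"
      using c_top by auto
    moreover have "(D j has_real_derivative 0) (at y within {\<alpha>..\<beta>})" if "y \<in> {\<alpha>..\<beta>}" for y
      using D_deriv j Suc.IH Suc.prems that by (metis Suc_leD)
    moreover have "(\<Sum>k\<le>N. c k ^ j * D j (c k * 0)) = 0"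
      using derived[of j] j zero_in by (metis less_imp_le)
    ultimately show ?case
      using dilation_identity_constant_zero[OF zero_in] by (simp add: j_def)
  qed
  from this[of m] D0 show ?thesis by simp
qed

text \<open>The defining property of m(a): the sum sum_{k<N} (a_k/a_N)^m drops below 1 for
  some m because every ratio lies in [0,1), so the least such m has it too.\<close>
lemma m_of_property:
  fixes a :: "nat \<Rightarrow> real"
  assumes "\<And>k. k < N \<Longrightarrow> 0 \<le> a k \<and> a k < a N"
  shows "(\<Sum>k<N. (a k / a N) ^ m_of N a) < 1"
proof -
  have "(\<lambda>m. \<Sum>k<N. (a k / a N) ^ m) \<longlonglongrightarrow> (\<Sum>k<N. 0)"
  proof (intro tendsto_sum LIMSEQ_power_zero)
    fix k assume "k \<in> {..<N}"
    then show "norm (a k / a N) < 1"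
      using assms[of k] by simp
  qed
  then have "\<forall>\<^sub>F m in sequentially. (\<Sum>k<N. (a k / a N) ^ m) < 1"
    using order_tendstoD(2) by fastforce
  then have "\<exists>m. (\<Sum>k<N. (a k / a N) ^ m) < 1"
    by (auto simp: eventually_sequentially)
  then show ?thesis
    unfolding m_of_def by (rule LeastI_ex)
qed

text \<open>A solution on an interval around 0 satisfies the normalised dilation identity
  with c_k = a_k / a_N: apply the equation at the point y / a_N.\<close>
lemma solution_normalised_identity:
  fixes a :: "nat \<Rightarrow> real" and \<alpha> \<beta> y :: real
  assumes "\<alpha> \<le> 0" "0 \<le> \<beta>"
    and bounds: "\<And>k. k \<le> N \<Longrightarrow> 1 \<le> a k \<and> a k \<le> a N"
    and sol: "is_solution_on N a {\<alpha>..\<beta>} f"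
    and y: "y \<in> {\<alpha>..\<beta>}"
  shows "(\<Sum>k\<le>N. f (a k / a N * y)) = 0"
proof -
  have "a k * (y / a N) \<in> {\<alpha>..\<beta>}" if "k \<le> N" for k
  proof -
    have "a k / a N * y \<in> {\<alpha>..\<beta>}"
    proof (rule scaled_mem_interval[OF assms(1,2) _ _ y])
      show "0 \<le> a k / a N" "a k / a N \<le> 1"
        using bounds[OF that] bounds[of N] by simp_all
    qed
    then show ?thesis by simp
  qed
  then have "(\<Sum>k\<le>N. f (a k * (y / a N))) = 0"
    using sol unfolding is_solution_on_def by blast
  then show ?thesis by simp
qed

theorem mainTheorem1:
  fixes N :: nat and a :: "nat \<Rightarrow> real" and \<delta> :: real
  assumes "N \<ge> 1"
    and "a 0 = 1"
    and "\<And>k. k < N \<Longrightarrow> a k < a (Suc k)"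
    and "\<delta> > 0"
  shows "(\<forall>f. is_solution_on N a {0..\<delta>} f \<and> Cm_on (m_of N a) 0 \<delta> f
              \<longrightarrow> (\<forall>x\<in>{0..\<delta>}. f x = 0))
       \<and> (\<forall>f. is_solution_on N a {-\<delta>..0} f \<and> Cm_on (m_of N a) (-\<delta>) 0 f
              \<longrightarrow> (\<forall>x\<in>{-\<delta>..0}. f x = 0))"
proof -
  have a_ge_1: "1 \<le> a k" if "k \<le> N" for k
    using strict_mono_upto[of N a, OF assms(3), of 0 k] that assms(2) by (cases k) auto
  have a_le_top: "a k \<le> a N" if "k \<le> N" for k
    using strict_mono_upto[of N a, OF assms(3), of k N] that by (cases "k = N") auto
  have small: "(\<Sum>k<N. (a k / a N) ^ m_of N a) < 1"
  proof (rule m_of_property)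
    fix k assume "k < N"
    then show "0 \<le> a k \<and> a k < a N"
      using a_ge_1[of k] strict_mono_upto[of N a, OF assms(3), of k N] by simp
  qed
  have vanish: "\<forall>x\<in>{\<alpha>..\<beta>}. f x = 0"
    if "\<alpha> \<le> 0" "0 \<le> \<beta>" "\<alpha> < \<beta>" "is_solution_on N a {\<alpha>..\<beta>} f" "Cm_on (m_of N a) \<alpha> \<beta> f"
    for \<alpha> \<beta> f
  proof (rule dilation_identity_forces_zero[where c="\<lambda>k. a k / a N"])
    show "y \<in> {\<alpha>..\<beta>} \<Longrightarrow> (\<Sum>k\<le>N. f (a k / a N * y)) = 0" for y
      using solution_normalised_identity[OF that(1,2) _ that(4)] a_ge_1 a_le_top by blast
  next
    fix k assume "k \<le> N"
    then show "0 < a k / a N" "a k / a N \<le> 1"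
      using a_ge_1[of k] a_ge_1[of N] a_le_top[of k] by simp_all
  next
    show "a N / a N = 1"
      using a_ge_1[of N] by simp
  qed (use that small in simp_all)
  show ?thesis
    using vanish[of 0 \<delta>] vanish[of "-\<delta>" 0] assms(4) by auto
qed

end
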